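(* In the Sinkhorn setting described in the context, for all integers $t\ge1$, $$H(\mu_{2t}|\mu)+H(\mu|\mu_{2t})\le\frac{2H(\pi_*|\pi_{2\lfloor t/2\rfloor})}{t}.$$
   Context: Sinkhorn setting: $(\mathsf{X},\mu)$, $(\mathsf{Y},\nu)$ are Polish probability spaces, $c:\mathsf{X}\times\mathsf{Y}\to\mathbb{R}$ is measurable, $e^{-c}\in L^1(\mu\otimes\nu)$, and $\mathcal{C}_1(\mu,\nu):=\inf_{\pi\in\Pi(\mu,\nu)}\int c\,d\pi+H(\pi|\mu\otimes\nu)$ is finite, where $\Pi(\mu,\nu)$ is the set of couplings and $H(\rho|\sigma)=\int\log\frac{d\rho}{d\sigma}d\rho$ if $\rho\ll\sigma$, $+\infty$ otherwise. $\pi_*$ is the unique minimizer; $d\pi_*=e^{\varphi_*\oplus\psi_*-c}d(\mu\otimes\nu)$ with potentials $\varphi_*,\psi_*$ (unique up to $(\varphi_*-a,\psi_*+a)$), $(\varphi\oplus\psi)(x,y)=\varphi(x)+\psi(y)$. Let $\xi=\int e^{-c}d(\mu\otimes\nu)$ and $dR=\xi^{-1}e^{-c}d(\mu\otimes\nu)$. Sinkhorn iterates: $\varphi_0:=0$, and for $t\ge0$, $\psi_t(y):=-\log\int e^{\varphi_t(x)-c(x,y)}\mu(dx)$, $\varphi_{t+1}(x):=-\log\int e^{\psi_t(y)-c(x,y)}\nu(dy)$; set $\psi_{-1}:=-\log\xi$. Define probability measures $d\pi_{2t}=e^{\varphi_t\oplus\psi_t-c}d(\mu\otimes\nu)$ and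 $d\pi_{2t-1}=e^{\varphi_t\oplus\psi_{t-1}-c}d(\mu\otimes\nu)$ for $t\ge0$ (so $\pi_{-1}=R$). Then $\pi_{2t}$ has marginals $(\mu_{2t},\nu)$ and $\pi_{2t-1}$ has marginals $(\mu,\nu_{2t-1})$, with $d\mu_{2t}/d\mu=e^{\varphi_t-\varphi_{t+1}}$ and $d\nu_{2t-1}/d\nu=e^{\psi_{t-1}-\psi_t}$. *)

theory Defs
  imports "HOL-Probability.Probability"
begin

text \<open>The value is +infinity also when the log-density is not rho-integrable (for probability
  measures only the positive part can fail to be integrable).\<close>
definition rel_ent :: "'a measure \<Rightarrow> 'a measure \<Rightarrow> ereal" where
  "rel_ent \<rho> \<sigma> =
     (if sets \<rho> = sets \<sigma> \<and> absolutely_continuous \<sigma> \<rho>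
         \<and> integrable \<rho> (\<lambda>x. ln (enn2real (RN_deriv \<sigma> \<rho> x)))
      then ereal (\<integral>x. ln (enn2real (RN_deriv \<sigma> \<rho> x)) \<partial>\<rho>)
      else \<infinity>)"

definition couplings :: "'a measure \<Rightarrow> 'b measure \<Rightarrow> ('a \<times> 'b) measure set" where
  "couplings \<mu> \<nu> = {\<pi>. prob_space \<pi> \<and> sets \<pi> = sets (\<mu> \<Otimes>\<^sub>M \<nu>)
      \<and> distr \<pi> \<mu> fst = \<mu> \<and> distr \<pi> \<nu> snd = \<nu>}"

definition cost_int :: "('a \<times> 'b) measure \<Rightarrow> ('a \<Rightarrow> 'b \<Rightarrow> real) \<Rightarrow> ereal" where
  "cost_int \<pi> c = enn2ereal (\<integral>\<^sup>+ z. ennreal (max 0 (c (fst z) (snd z))) \<partial>\<pi>)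
                 - enn2ereal (\<integral>\<^sup>+ z. ennreal (max 0 (- c (fst z) (snd z))) \<partial>\<pi>)"

definition eot_obj :: "'a measure \<Rightarrow> 'b measure \<Rightarrow> ('a \<Rightarrow> 'b \<Rightarrow> real) \<Rightarrow> ('a \<times> 'b) measure \<Rightarrow> ereal" where
  "eot_obj \<mu> \<nu> c \<pi> = cost_int \<pi> c + rel_ent \<pi> (\<mu> \<Otimes>\<^sub>M \<nu>)"

definition C1 :: "'a measure \<Rightarrow> 'b measure \<Rightarrow> ('a \<Rightarrow> 'b \<Rightarrow> real) \<Rightarrow> ereal" where
  "C1 \<mu> \<nu> c = (INF \<pi>\<in>couplings \<mu> \<nu>. eot_obj \<mu> \<nu> c \<pi>)"

definition sk_psi_of :: "'a measure \<Rightarrow> ('a \<Rightarrow> 'b \<Rightarrow> real) \<Rightarrow> ('a \<Rightarrow> real) \<Rightarrow> 'b \<Rightarrow> real" where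
  "sk_psi_of \<mu> c \<phi> y = - ln (\<integral>x. exp (\<phi> x - c x y) \<partial>\<mu>)"

primrec sk_phi :: "'a measure \<Rightarrow> 'b measure \<Rightarrow> ('a \<Rightarrow> 'b \<Rightarrow> real) \<Rightarrow> nat \<Rightarrow> 'a \<Rightarrow> real" where
  "sk_phi \<mu> \<nu> c 0 = (\<lambda>x. 0)"
| "sk_phi \<mu> \<nu> c (Suc t) =
     (\<lambda>x. - ln (\<integral>y. exp (sk_psi_of \<mu> c (sk_phi \<mu> \<nu> c t) y - c x y) \<partial>\<nu>))"

definition sk_psi :: "'a measure \<Rightarrow> 'b measure \<Rightarrow> ('a \<Rightarrow> 'b \<Rightarrow> real) \<Rightarrow> nat \<Rightarrow> 'b \<Rightarrow> real" where
  "sk_psi \<mu> \<nu> c t = sk_psi_of \<mu> c (sk_phi \<mu> \<nu> c t)"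

text \<open>pi_n for n >= 0: pi_{2t} has density exp(phi_t + psi_t - c), pi_{2t-1} (t >= 1) has
  density exp(phi_t + psi_{t-1} - c) with respect to mu x nu.\<close>
definition sk_pi :: "'a measure \<Rightarrow> 'b measure \<Rightarrow> ('a \<Rightarrow> 'b \<Rightarrow> real) \<Rightarrow> nat \<Rightarrow> ('a \<times> 'b) measure" where
  "sk_pi \<mu> \<nu> c n =
     (if even n then
        density (\<mu> \<Otimes>\<^sub>M \<nu>) (\<lambda>z. ennreal (exp (sk_phi \<mu> \<nu> c (n div 2) (fst z)
                     + sk_psi \<mu> \<nu> c (n div 2) (snd z) - c (fst z) (snd z))))
      else
        density (\<mu> \<Otimes>\<^sub>M \<nu>) (\<lambda>z. ennreal (exp (sk_phi \<mu> \<nu> c ((n + 1) div 2) (fst z)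
                     + sk_psi \<mu> \<nu> c ((n - 1) div 2) (snd z) - c (fst z) (snd z)))))"

definition sk_mu_even :: "'a measure \<Rightarrow> 'b measure \<Rightarrow> ('a \<Rightarrow> 'b \<Rightarrow> real) \<Rightarrow> nat \<Rightarrow> 'a measure" where
  "sk_mu_even \<mu> \<nu> c t = distr (sk_pi \<mu> \<nu> c (2 * t)) \<mu> fst"

end

theory Submission
  imports Defs
begin

text \<open>
  The Sinkhorn iterates alternately fit the two marginals: pi_odd t is pi_even t reweighted by a
  function of x, and pi_even (t + 1) is pi_odd t reweighted by a function of y. For any coupling
  \<pi>, the chain rule for relative entropy therefore gives
    H(\<pi>|pi_even s) \<ge> H(\<mu>|\<mu>_2s) + H(\<nu>|\<nu>_2s+1) + H(\<pi>|pi_even (s + 1)),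
  and the data processing inequality along the two coordinate projections shows that
  H(\<mu>|\<mu>_2s) and H(\<mu>_2s|\<mu>) are non-increasing and interleaved with H(\<nu>_2s+1|\<nu>) and
  H(\<nu>|\<nu>_2s+1). So for every s < t the two terms subtracted at step s dominate
  H(\<mu>_2t|\<mu>) + H(\<mu>|\<mu>_2t), and summing over t div 2 \<le> s < t yields the bound with the
  factor (t - t div 2) \<ge> t / 2.
\<close>

lemma telescoping_sum_le:
  fixes e D :: "nat \<Rightarrow> ereal"
  assumes "\<And>s. e s + D (Suc s) \<le> D s"
  shows "(\<Sum>s\<in>{k..<k + n}. e s) + D (k + n) \<le> D k"
proof (induction n)
  case (Suc n)
  have "(\<Sum>s\<in>{k..<k + Suc n}. e s) + D (k + Suc n)
      = (\<Sum>s\<in>{k..<k + n}. e s) + (e (k + n) + D (Suc (k + n)))"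
    by (simp add: add.assoc)
  also have "\<dots> \<le> (\<Sum>s\<in>{k..<k + n}. e s) + D (k + n)"
    using assms by (rule add_left_mono)
  also have "\<dots> \<le> D k" by (rule Suc.IH)
  finally show ?case .
qed simp

lemma telescoping_mean_le:
  fixes S :: ereal and e D :: "nat \<Rightarrow> ereal"
  assumes "\<And>s. e s + D (Suc s) \<le> D s" and "\<And>s. 0 \<le> D s"
    and "\<And>s. k \<le> s \<Longrightarrow> s < t \<Longrightarrow> S \<le> e s" and "k \<le> t"
  shows "S * ereal (real (t - k)) \<le> D k"
proof -
  have "S * ereal (real (t - k)) = (\<Sum>s\<in>{k..<t}. S)"
    by (simp add: sum_constant_ereal)
  also have "\<dots> \<le> (\<Sum>s\<in>{k..<t}. e s)"
    using assms(3) by (intro sum_mono) auto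
  also have "\<dots> \<le> (\<Sum>s\<in>{k..<t}. e s) + D t"
    using assms(2) by (simp add: add_increasing2)
  also have "\<dots> \<le> D k"
    using telescoping_sum_le[of e D k "t - k"] assms(1) \<open>k \<le> t\<close> by simp
  finally show ?thesis .
qed

lemma ereal_le_twice_divide:
  fixes S D :: ereal
  assumes "0 \<le> S" and "1 \<le> t" and "S * ereal (real (t - t div 2)) \<le> D"
  shows "S \<le> 2 * D / ereal (real t)"
proof -
  have "ereal (real t) * S \<le> 2 * ereal (real (t - t div 2)) * S"
    using assms(1) by (intro ereal_mult_right_mono) auto
  also have "\<dots> = 2 * (S * ereal (real (t - t div 2)))"
    by (metis mult.assoc mult.commute)
  also have "\<dots> \<le> 2 * D"
    using assms(3) by (rule ereal_mult_left_mono) simp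
  finally show ?thesis
    using assms(2) by (subst ereal_le_divide_pos) auto
qed

lemma rel_ent_density:
  assumes "sigma_finite_measure R" and f[measurable]: "f \<in> borel_measurable R" and "\<And>x. 0 \<le> f x"
  shows "rel_ent (density R (\<lambda>x. ennreal (f x))) R =
     (if integrable (density R (\<lambda>x. ennreal (f x))) (\<lambda>x. ln (f x))
      then ereal (\<integral>x. ln (f x) \<partial>density R (\<lambda>x. ennreal (f x))) else \<infinity>)"
proof -
  interpret sigma_finite_measure R by fact
  let ?P = "density R (\<lambda>x. ennreal (f x))"
  have "AE x in R. ennreal (f x) = RN_deriv R ?P x"
    by (rule RN_deriv_unique) auto
  then have ae: "AE x in ?P. ln (enn2real (RN_deriv R ?P x)) = ln (f x)"
    using assms(3) by (subst AE_density) (auto elim!: eventually_mono dest!: sym[of "ennreal _"])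
  have "integrable ?P (\<lambda>x. ln (enn2real (RN_deriv R ?P x))) = integrable ?P (\<lambda>x. ln (f x))"
    by (rule integrable_cong_AE) (use ae in auto)
  moreover have "(\<integral>x. ln (enn2real (RN_deriv R ?P x)) \<partial>?P) = (\<integral>x. ln (f x) \<partial>?P)"
    by (rule integral_cong_AE) (use ae in auto)
  moreover have "absolutely_continuous R ?P"
    by (rule absolutely_continuousI_density) simp
  ultimately show ?thesis unfolding rel_ent_def by simp
qed

lemma rel_ent_finite_densityE:
  assumes "prob_space P" and "prob_space R" and "rel_ent P R \<noteq> \<infinity>"
  obtains f where "f \<in> borel_measurable R" "\<And>x. 0 \<le> f x" "P = density R (\<lambda>x. ennreal (f x))"
proof -
  interpret R: prob_space R by fact
  have ac: "sets P = sets R" "absolutely_continuous R P"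
    using assms(3) unfolding rel_ent_def by (auto split: if_splits)
  have "AE x in R. RN_deriv R P x \<noteq> \<infinity>"
    using ac by (intro R.RN_deriv_finite) (auto intro: prob_space_imp_sigma_finite assms(1))
  then have "density R (\<lambda>x. ennreal (enn2real (RN_deriv R P x))) = density R (RN_deriv R P)"
    by (intro density_cong) (auto elim!: eventually_mono simp: less_top)
  also have "\<dots> = P" using ac by (intro R.density_RN_deriv) auto
  finally show ?thesis
    by (intro that[of "\<lambda>x. enn2real (RN_deriv R P x)"]) auto
qed

lemma mult_max_0_neg_ln_le_1:
  assumes "0 \<le> (y::real)" shows "y * max 0 (- ln y) \<le> 1"
proof (cases "0 < y \<and> y < 1")
  case True
  have "- ln y = ln (1 / y)" using True by (simp add: ln_div)
  also have "\<dots> \<le> 1 / y - 1" using True by (intro ln_le_minus_one) simp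
  finally have "y * (- ln y) \<le> 1 - y" using True by (simp add: field_simps)
  then show ?thesis using True by (simp add: max_def)
qed (use assms in \<open>auto simp: max_def\<close>)

lemma integrable_neg_ln_density:
  assumes "prob_space R" and [measurable]: "f \<in> borel_measurable R" and "\<And>x. 0 \<le> f x"
  shows "integrable (density R (\<lambda>x. ennreal (f x))) (\<lambda>x. max 0 (- ln (f x)))"
proof (rule integrableI_nonneg)
  interpret prob_space R by fact
  have "(\<integral>\<^sup>+x. ennreal (max 0 (- ln (f x))) \<partial>density R (\<lambda>x. ennreal (f x)))
      = (\<integral>\<^sup>+x. ennreal (f x * max 0 (- ln (f x))) \<partial>R)"
    using assms(3) by (subst nn_integral_density) (auto simp: ennreal_mult)
  also have "\<dots> \<le> (\<integral>\<^sup>+x. 1 \<partial>R)"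
    using assms(3) by (intro nn_integral_mono) (simp add: mult_max_0_neg_ln_le_1)
  finally show "(\<integral>\<^sup>+x. ennreal (max 0 (- ln (f x))) \<partial>density R (\<lambda>x. ennreal (f x))) < \<infinity>"
    by (simp add: emeasure_space_1 order_le_less_trans)
qed simp_all

text \<open>Gibbs' inequality: integrate ln F \<le> ln h + F / h - 1, where F / h has Q-integral at most 1.\<close>
lemma integral_ln_le_integral_ln_density:
  assumes "prob_space P" and Q: "prob_space (density P (\<lambda>x. ennreal (h x)))"
    and [measurable]: "h \<in> borel_measurable P" and h_nonneg: "\<And>x. 0 \<le> h x"
    and ln_h: "integrable (density P (\<lambda>x. ennreal (h x))) (\<lambda>x. ln (h x))"
    and [measurable]: "F \<in> borel_measurable P" and F_pos: "\<And>x. 0 < F x"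
    and F_mass: "(\<integral>\<^sup>+x. ennreal (F x) \<partial>P) \<le> 1"
    and ln_F_neg: "integrable (density P (\<lambda>x. ennreal (h x))) (\<lambda>x. max 0 (- ln (F x)))"
  shows "integrable (density P (\<lambda>x. ennreal (h x))) (\<lambda>x. ln (F x))"
    and "(\<integral>x. ln (F x) \<partial>density P (\<lambda>x. ennreal (h x))) \<le> (\<integral>x. ln (h x) \<partial>density P (\<lambda>x. ennreal (h x)))"
proof -
  let ?Q = "density P (\<lambda>x. ennreal (h x))"
  interpret Q: prob_space ?Q by fact
  have ratio_mass: "(\<integral>\<^sup>+x. ennreal (F x / h x) \<partial>?Q) \<le> 1"
  proof -
    have "(\<integral>\<^sup>+x. ennreal (F x / h x) \<partial>?Q) = (\<integral>\<^sup>+x. ennreal (h x * (F x / h x)) \<partial>P)"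
      using h_nonneg F_pos
      by (subst nn_integral_density)
        (auto simp del: times_divide_eq_right simp: ennreal_mult less_imp_le)
    also have "\<dots> \<le> (\<integral>\<^sup>+x. ennreal (F x) \<partial>P)"
      by (intro nn_integral_mono ennreal_leI) (simp add: F_pos less_imp_le)
    finally show ?thesis using F_mass by simp
  qed
  have ratio: "integrable ?Q (\<lambda>x. F x / h x)"
    using ratio_mass h_nonneg F_pos
    by (intro integrableI_nonneg) (auto simp: less_imp_le order_le_less_trans)
  have "ennreal (\<integral>x. F x / h x \<partial>?Q) \<le> 1"
    using ratio_mass h_nonneg F_pos
    by (subst nn_integral_eq_integral[OF ratio, symmetric]) (auto simp: less_imp_le)
  then have ratio_int: "(\<integral>x. F x / h x \<partial>?Q) \<le> 1"
    by simp
  have bound: "AE x in ?Q. ln (F x) \<le> ln (h x) + F x / h x - 1"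
  proof -
    have "AE x in ?Q. 0 < h x" by (subst AE_density) auto
    then show ?thesis
    proof (rule eventually_mono)
      fix x assume "0 < h x"
      then have "ln (F x / h x) \<le> F x / h x - 1" using F_pos by (intro ln_le_minus_one) simp
      then show "ln (F x) \<le> ln (h x) + F x / h x - 1" using \<open>0 < h x\<close> F_pos[of x]
        by (simp add: ln_div)
    qed
  qed
  show int: "integrable ?Q (\<lambda>x. ln (F x))"
  proof (rule Bochner_Integration.integrable_bound)
    show "integrable ?Q (\<lambda>x. \<bar>ln (h x)\<bar> + F x / h x + 1 + max 0 (- ln (F x)))"
      using ln_h ratio ln_F_neg by auto
    show "AE x in ?Q. norm (ln (F x)) \<le> norm (\<bar>ln (h x)\<bar> + F x / h x + 1 + max 0 (- ln (F x)))"
      using bound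
    proof (rule eventually_mono)
      fix x assume "ln (F x) \<le> ln (h x) + F x / h x - 1"
      moreover have "0 \<le> F x / h x" using h_nonneg F_pos by (simp add: less_imp_le)
      ultimately show "norm (ln (F x)) \<le> norm (\<bar>ln (h x)\<bar> + F x / h x + 1 + max 0 (- ln (F x)))"
        by (simp add: abs_le_iff max_def) linarith
    qed
  qed simp
  have "(\<integral>x. ln (F x) \<partial>?Q) \<le> (\<integral>x. ln (h x) + F x / h x - 1 \<partial>?Q)"
    using int ln_h ratio bound by (intro integral_mono_AE) auto
  also have "\<dots> = (\<integral>x. ln (h x) \<partial>?Q) + (\<integral>x. F x / h x \<partial>?Q) - 1"
    using ln_h ratio by (simp add: Q.prob_space Q.prob_space[unfolded space_density])
  finally show "(\<integral>x. ln (F x) \<partial>?Q) \<le> (\<integral>x. ln (h x) \<partial>?Q)"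
    using ratio_int by linarith
qed

lemma rel_ent_nonneg:
  assumes "prob_space P" and "prob_space R"
  shows "0 \<le> rel_ent P R"
proof (cases "rel_ent P R = \<infinity>")
  case False
  then obtain f where f[measurable]: "f \<in> borel_measurable R" and f_nonneg: "\<And>x. 0 \<le> f x"
    and P: "P = density R (\<lambda>x. ennreal (f x))"
    using rel_ent_finite_densityE[OF assms] by blast
  have "rel_ent P R = (if integrable P (\<lambda>x. ln (f x)) then ereal (\<integral>x. ln (f x) \<partial>P) else \<infinity>)"
    unfolding P using assms(2) f_nonneg
    by (intro rel_ent_density) (auto intro: prob_space_imp_sigma_finite)
  moreover have "(\<integral>x. ln 1 \<partial>P) \<le> (\<integral>x. ln (f x) \<partial>P)" if "integrable P (\<lambda>x. ln (f x))"
    using integral_ln_le_integral_ln_density(2)[of R f "\<lambda>_. 1"] assms that f_nonneg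
    unfolding P by (simp add: prob_space.emeasure_space_1)
  ultimately show ?thesis by simp
qed simp

lemma rel_ent_density_comp_eq_distr:
  assumes "prob_space P" and [measurable]: "X \<in> measurable P A" "f \<in> borel_measurable A"
    and "\<And>x. 0 \<le> f x"
  shows "rel_ent (density P (\<lambda>\<omega>. ennreal (f (X \<omega>)))) P
       = rel_ent (density (distr P A X) (\<lambda>x. ennreal (f x))) (distr P A X)"
proof -
  interpret prob_space P by fact
  have distr: "density (distr P A X) (\<lambda>x. ennreal (f x)) = distr (density P (\<lambda>\<omega>. ennreal (f (X \<omega>)))) A X"
    by (rule density_distr) auto
  have "rel_ent (density P (\<lambda>\<omega>. ennreal (f (X \<omega>)))) P
     = (if integrable (density P (\<lambda>\<omega>. ennreal (f (X \<omega>)))) (\<lambda>\<omega>. ln (f (X \<omega>)))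
        then ereal (\<integral>\<omega>. ln (f (X \<omega>)) \<partial>density P (\<lambda>\<omega>. ennreal (f (X \<omega>)))) else \<infinity>)"
    using assms(4) by (intro rel_ent_density) (auto intro: prob_space_imp_sigma_finite assms(1))
  also have "\<dots> = rel_ent (density (distr P A X) (\<lambda>x. ennreal (f x))) (distr P A X)"
    using assms(4) prob_space_distr[of X A]
    by (subst rel_ent_density) (auto simp: distr integrable_distr_eq integral_distr
        intro: prob_space_imp_sigma_finite)
  finally show ?thesis .
qed

text \<open>The data processing inequality: Gibbs' inequality with F = f \<circ> X.\<close>
lemma rel_ent_distr_le:
  assumes "prob_space P" and Q: "prob_space (density P (\<lambda>\<omega>. ennreal (h \<omega>)))"
    and [measurable]: "h \<in> borel_measurable P" and h_nonneg: "\<And>\<omega>. 0 \<le> h \<omega>"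
    and X[measurable]: "X \<in> measurable P A" and [measurable]: "f \<in> borel_measurable A"
    and f_pos: "\<And>x. 0 < f x"
    and QX: "distr (density P (\<lambda>\<omega>. ennreal (h \<omega>))) A X = density (distr P A X) (\<lambda>x. ennreal (f x))"
  shows "rel_ent (distr (density P (\<lambda>\<omega>. ennreal (h \<omega>))) A X) (distr P A X)
       \<le> rel_ent (density P (\<lambda>\<omega>. ennreal (h \<omega>))) P"
proof -
  let ?Q = "density P (\<lambda>\<omega>. ennreal (h \<omega>))"
  interpret prob_space P by fact
  interpret Q: prob_space ?Q by fact
  have PX: "prob_space (distr P A X)" by (rule prob_space_distr) simp
  have rel_ent_Q: "rel_ent ?Q P = (if integrable ?Q (\<lambda>\<omega>. ln (h \<omega>)) then ereal (\<integral>\<omega>. ln (h \<omega>) \<partial>?Q) else \<infinity>)"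
    using h_nonneg by (intro rel_ent_density) (auto intro: prob_space_imp_sigma_finite assms(1))
  have rel_ent_QX: "rel_ent (distr ?Q A X) (distr P A X)
      = (if integrable ?Q (\<lambda>\<omega>. ln (f (X \<omega>))) then ereal (\<integral>\<omega>. ln (f (X \<omega>)) \<partial>?Q) else \<infinity>)"
    unfolding QX using PX f_pos
    by (subst rel_ent_density) (auto simp flip: QX simp: integrable_distr_eq integral_distr less_imp_le
        intro: prob_space_imp_sigma_finite)
  have mass: "(\<integral>\<^sup>+\<omega>. ennreal (f (X \<omega>)) \<partial>P) = 1"
  proof -
    have "(\<integral>\<^sup>+\<omega>. ennreal (f (X \<omega>)) \<partial>P) = emeasure (distr ?Q A X) (space (distr P A X))"
      unfolding QX
      by (subst emeasure_density) (auto simp: nn_integral_distr measurable_space[OF X] intro!: nn_integral_cong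
          split: split_indicator)
    then show ?thesis
      using prob_space.emeasure_space_1[OF Q.prob_space_distr[of X A]] by simp
  qed
  have neg: "integrable ?Q (\<lambda>\<omega>. max 0 (- ln (f (X \<omega>))))"
  proof -
    have "integrable (distr ?Q A X) (\<lambda>x. max 0 (- ln (f x)))"
      unfolding QX using PX f_pos by (intro integrable_neg_ln_density) (auto simp: less_imp_le)
    then show ?thesis by (subst (asm) integrable_distr_eq) auto
  qed
  show ?thesis
    using integral_ln_le_integral_ln_density[OF assms(1) Q _ h_nonneg _ _ f_pos _ neg] mass
    unfolding rel_ent_Q rel_ent_QX by simp
qed

lemma rel_ent_distr_le_distr:
  assumes "prob_space P" and Q: "prob_space (density P (\<lambda>\<omega>. ennreal (g (Y \<omega>))))"
    and [measurable]: "X \<in> measurable P A" "Y \<in> measurable P B"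
    and [measurable]: "f \<in> borel_measurable A" "g \<in> borel_measurable B"
    and f_pos: "\<And>x. 0 < f x" and g_nonneg: "\<And>y. 0 \<le> g y"
    and QX: "distr (density P (\<lambda>\<omega>. ennreal (g (Y \<omega>)))) A X = density (distr P A X) (\<lambda>x. ennreal (f x))"
  shows "rel_ent (distr (density P (\<lambda>\<omega>. ennreal (g (Y \<omega>)))) A X) (distr P A X)
       \<le> rel_ent (distr (density P (\<lambda>\<omega>. ennreal (g (Y \<omega>)))) B Y) (distr P B Y)"
proof -
  have "rel_ent (distr (density P (\<lambda>\<omega>. ennreal (g (Y \<omega>)))) A X) (distr P A X)
      \<le> rel_ent (density P (\<lambda>\<omega>. ennreal (g (Y \<omega>)))) P"
    using g_nonneg f_pos by (intro rel_ent_distr_le[OF assms(1) Q _ _ _ _ _ QX]) auto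
  also have "\<dots> = rel_ent (density (distr P B Y) (\<lambda>y. ennreal (g y))) (distr P B Y)"
    using g_nonneg by (intro rel_ent_density_comp_eq_distr assms(1)) auto
  also have "density (distr P B Y) (\<lambda>y. ennreal (g y)) = distr (density P (\<lambda>\<omega>. ennreal (g (Y \<omega>)))) B Y"
    by (rule density_distr) auto
  finally show ?thesis .
qed

text \<open>With r = dP/dR, the density of P w.r.t. e^w R is r e^-w. The negative part of its logarithm
  is integrable automatically, and the positive part is dominated by |ln r| + max 0 (- w).\<close>
lemma rel_ent_change_reference:
  assumes R: "prob_space R" and P: "prob_space P" and sets_P: "sets P = sets R"
    and [measurable]: "w \<in> borel_measurable R"
    and R': "prob_space (density R (\<lambda>\<omega>. ennreal (exp (w \<omega>))))"
    and fin: "rel_ent P R \<noteq> \<infinity>" and w_neg: "integrable P (\<lambda>\<omega>. max 0 (- w \<omega>))"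
  shows "integrable P w"
    and "rel_ent P R = ereal (\<integral>\<omega>. w \<omega> \<partial>P) + rel_ent P (density R (\<lambda>\<omega>. ennreal (exp (w \<omega>))))"
proof -
  let ?R' = "density R (\<lambda>\<omega>. ennreal (exp (w \<omega>)))"
  obtain r where [measurable]: "r \<in> borel_measurable R" and r_nonneg: "\<And>\<omega>. 0 \<le> r \<omega>"
    and P_eq: "P = density R (\<lambda>\<omega>. ennreal (r \<omega>))"
    using rel_ent_finite_densityE[OF P R fin] by blast
  have rel_ent_R: "rel_ent P R = (if integrable P (\<lambda>\<omega>. ln (r \<omega>)) then ereal (\<integral>\<omega>. ln (r \<omega>) \<partial>P) else \<infinity>)"
    unfolding P_eq using R r_nonneg
    by (intro rel_ent_density) (auto intro: prob_space_imp_sigma_finite)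
  with fin have ln_r: "integrable P (\<lambda>\<omega>. ln (r \<omega>))" by (auto split: if_splits)
  define r' where "r' \<omega> = r \<omega> * exp (- w \<omega>)" for \<omega>
  have [measurable]: "r' \<in> borel_measurable R" unfolding r'_def by simp
  have r'_nonneg: "0 \<le> r' \<omega>" for \<omega> unfolding r'_def using r_nonneg by simp
  have P_eq': "P = density ?R' (\<lambda>\<omega>. ennreal (r' \<omega>))"
    unfolding P_eq r'_def using r_nonneg
    by (subst density_density_eq) (auto simp flip: ennreal_mult simp: exp_minus field_simps)
  have rel_ent_R': "rel_ent P ?R' = (if integrable P (\<lambda>\<omega>. ln (r' \<omega>)) then ereal (\<integral>\<omega>. ln (r' \<omega>) \<partial>P) else \<infinity>)"
    by (subst (1 2 3) P_eq')
      (rule rel_ent_density, use R' r'_nonneg in \<open>auto intro: prob_space_imp_sigma_finite\<close>)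
  have r'_neg: "integrable P (\<lambda>\<omega>. max 0 (- ln (r' \<omega>)))"
    by (subst P_eq') (use R' r'_nonneg in \<open>auto intro: integrable_neg_ln_density\<close>)
  have ln_r'_eq: "AE \<omega> in P. ln (r' \<omega>) = ln (r \<omega>) - w \<omega>"
  proof -
    have "AE \<omega> in P. 0 < r \<omega>" unfolding P_eq by (subst AE_density) auto
    then show ?thesis by (rule eventually_mono) (simp add: r'_def ln_mult)
  qed
  have [measurable]: "r \<in> borel_measurable P" "r' \<in> borel_measurable P" "w \<in> borel_measurable P"
    unfolding measurable_cong_sets[OF sets_P refl] by simp_all
  have ln_r': "integrable P (\<lambda>\<omega>. ln (r' \<omega>))"
  proof (rule Bochner_Integration.integrable_bound)
    show "integrable P (\<lambda>\<omega>. \<bar>ln (r \<omega>)\<bar> + max 0 (- w \<omega>) + max 0 (- ln (r' \<omega>)))"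
      using ln_r w_neg r'_neg by auto
    show "AE \<omega> in P. norm (ln (r' \<omega>)) \<le> norm (\<bar>ln (r \<omega>)\<bar> + max 0 (- w \<omega>) + max 0 (- ln (r' \<omega>)))"
      using ln_r'_eq by (rule eventually_mono) auto
  qed simp
  show w: "integrable P w"
  proof (rule integrable_cong_AE[THEN iffD1])
    show "integrable P (\<lambda>\<omega>. ln (r \<omega>) - ln (r' \<omega>))" using ln_r ln_r' by simp
    show "AE \<omega> in P. ln (r \<omega>) - ln (r' \<omega>) = w \<omega>" using ln_r'_eq by (rule eventually_mono) simp
  qed simp_all
  have "(\<integral>\<omega>. ln (r \<omega>) \<partial>P) = (\<integral>\<omega>. w \<omega> + ln (r' \<omega>) \<partial>P)"
    by (rule integral_cong_AE) (use ln_r'_eq in \<open>auto elim!: eventually_mono\<close>)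
  also have "\<dots> = (\<integral>\<omega>. w \<omega> \<partial>P) + (\<integral>\<omega>. ln (r' \<omega>) \<partial>P)"
    using w ln_r' by simp
  finally show "rel_ent P R = ereal (\<integral>\<omega>. w \<omega> \<partial>P) + rel_ent P ?R'"
    unfolding rel_ent_R rel_ent_R' using ln_r ln_r' by simp
qed

text \<open>The chain rule; it holds with equality when the right-hand side is finite.\<close>
lemma rel_ent_distr_add_rel_ent_le:
  assumes R: "prob_space R" and P: "prob_space P" and sets_P: "sets P = sets R"
    and [measurable]: "X \<in> measurable R A" "u \<in> borel_measurable A"
    and R': "prob_space (density R (\<lambda>\<omega>. ennreal (exp (u (X \<omega>)))))"
    and PX: "distr P A X = density (distr R A X) (\<lambda>x. ennreal (exp (u x)))"
  shows "rel_ent (distr P A X) (distr R A X) + rel_ent P (density R (\<lambda>\<omega>. ennreal (exp (u (X \<omega>)))))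
       \<le> rel_ent P R"
proof (cases "rel_ent P R = \<infinity>")
  case False
  have [measurable]: "X \<in> measurable P A" unfolding measurable_cong_sets[OF sets_P refl] by simp
  have RX: "prob_space (distr R A X)" by (simp add: R prob_space.prob_space_distr)
  have "integrable (distr P A X) (\<lambda>x. max 0 (- ln (exp (u x))))"
    unfolding PX using RX by (intro integrable_neg_ln_density) auto
  then have "integrable P (\<lambda>\<omega>. max 0 (- u (X \<omega>)))"
    by (subst (asm) integrable_distr_eq) auto
  note change = rel_ent_change_reference[OF R P sets_P _ R' False this]
  have "rel_ent (distr P A X) (distr R A X)
      = (if integrable (distr P A X) (\<lambda>x. ln (exp (u x)))
         then ereal (\<integral>x. ln (exp (u x)) \<partial>distr P A X) else \<infinity>)"
    unfolding PX using RX by (intro rel_ent_density) (auto intro: prob_space_imp_sigma_finite)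
  also have "\<dots> = ereal (\<integral>\<omega>. u (X \<omega>) \<partial>P)"
    using change(1) by (simp add: integrable_distr_eq integral_distr)
  finally show ?thesis using change(2) by simp
qed simp

lemma AE_fibre_integral_pos:
  assumes "prob_space M1"
    and [measurable]: "(\<lambda>z. k (fst z) (snd z)) \<in> borel_measurable (M2 \<Otimes>\<^sub>M M1)"
    and k_pos: "\<And>y x. 0 < k y x"
    and [measurable]: "W \<in> borel_measurable M2" and W_pos: "\<And>y. 0 < W y"
    and fin: "(\<integral>\<^sup>+ y. ennreal (W y) * (\<integral>\<^sup>+ x. ennreal (k y x) \<partial>M1) \<partial>M2) < \<infinity>"
  shows "(\<lambda>y. \<integral>x. k y x \<partial>M1) \<in> borel_measurable M2"
    and "AE y in M2. 0 < (\<integral>x. k y x \<partial>M1) \<and> (\<integral>\<^sup>+ x. ennreal (k y x) \<partial>M1) = ennreal (\<integral>x. k y x \<partial>M1)"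
proof -
  interpret M1: prob_space M1 by fact
  have k'[measurable]: "case_prod k \<in> borel_measurable (M2 \<Otimes>\<^sub>M M1)"
    using assms(2) by (simp add: case_prod_beta')
  show "(\<lambda>y. \<integral>x. k y x \<partial>M1) \<in> borel_measurable M2"
    by (rule M1.borel_measurable_lebesgue_integral) simp
  have "AE y in M2. ennreal (W y) * (\<integral>\<^sup>+ x. ennreal (k y x) \<partial>M1) \<noteq> \<infinity>"
    using fin by (intro nn_integral_PInf_AE) auto
  then show "AE y in M2. 0 < (\<integral>x. k y x \<partial>M1) \<and> (\<integral>\<^sup>+ x. ennreal (k y x) \<partial>M1) = ennreal (\<integral>x. k y x \<partial>M1)"
    using AE_space[of M2]
  proof eventually_elim
    case (elim y)
    have [measurable]: "k y \<in> borel_measurable M1"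
      using measurable_Pair2[OF k' elim(2)] by simp
    have "(\<integral>\<^sup>+ x. ennreal (k y x) \<partial>M1) \<noteq> \<infinity>"
      using elim(1) W_pos[of y] by (auto simp: ennreal_mult_eq_top_iff)
    then have int: "integrable M1 (k y)"
      using k_pos by (intro integrableI_nonneg) (auto simp: less_top intro: less_imp_le)
    then have "(\<integral>\<^sup>+ x. ennreal (k y x) \<partial>M1) = ennreal (\<integral>x. k y x \<partial>M1)"
      using k_pos by (intro nn_integral_eq_integral) (auto intro: less_imp_le)
    moreover have "0 < (\<integral>x. k y x \<partial>M1)"
    proof -
      have "\<not> (AE x in M1. k y x = 0)"
      proof
        assume "AE x in M1. k y x = 0"
        then have "AE x in M1. False" by (rule eventually_mono) (metis k_pos less_irrefl)
        then show False by simp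
      qed
      then have "(\<integral>x. k y x \<partial>M1) \<noteq> 0"
        using k_pos by (subst integral_nonneg_eq_0_iff_AE[OF int]) (auto intro: less_imp_le)
      then show ?thesis using k_pos by (simp add: less_imp_le order_neq_le_trans)
    qed
    ultimately show ?case by simp
  qed
qed

lemma ennreal_exp_mult: "ennreal (exp a) * ennreal (exp b) = ennreal (exp (a + b))"
  by (simp add: ennreal_mult[symmetric] exp_add)

lemma density_density_exp:
  assumes [measurable]: "f \<in> borel_measurable M" "g \<in> borel_measurable M" and "\<And>x. f x + g x = h x"
  shows "density (density M (\<lambda>x. ennreal (exp (f x)))) (\<lambda>x. ennreal (exp (g x)))
       = density M (\<lambda>x. ennreal (exp (h x)))"
  by (subst density_density_eq) (auto simp: ennreal_exp_mult assms(3))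

lemma emeasure_density_space:
  "f \<in> borel_measurable M \<Longrightarrow> emeasure (density M f) (space M) = (\<integral>\<^sup>+ x. f x \<partial>M)"
  by (subst emeasure_density) (auto intro!: nn_integral_cong split: split_indicator)

locale sinkhorn =
  fixes \<mu> :: "'a measure" and \<nu> :: "'b measure" and c :: "'a \<Rightarrow> 'b \<Rightarrow> real"
  assumes prob_\<mu>: "prob_space \<mu>" and prob_\<nu>: "prob_space \<nu>"
    and cost_measurable[measurable]: "(\<lambda>z. c (fst z) (snd z)) \<in> borel_measurable (\<mu> \<Otimes>\<^sub>M \<nu>)"
    and exp_neg_cost_integrable: "integrable (\<mu> \<Otimes>\<^sub>M \<nu>) (\<lambda>z. exp (- c (fst z) (snd z)))"
begin

sublocale pair_prob_space \<mu> \<nu>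
  by (simp add: prob_\<mu> prob_\<nu> pair_prob_space.intro pair_sigma_finite.intro prob_space_imp_sigma_finite)

lemma cost_swap_measurable[measurable]: "(\<lambda>z. c (snd z) (fst z)) \<in> borel_measurable (\<nu> \<Otimes>\<^sub>M \<mu>)"
  using measurable_comp[OF measurable_pair_swap' cost_measurable]
  by (simp add: comp_def case_prod_beta')

lemma cost_measurable_left: "x \<in> space \<mu> \<Longrightarrow> c x \<in> borel_measurable \<nu>"
  using measurable_Pair2[OF cost_measurable, of x] by simp

lemma cost_measurable_right: "y \<in> space \<nu> \<Longrightarrow> (\<lambda>x. c x y) \<in> borel_measurable \<mu>"
  using measurable_Pair2[OF cost_swap_measurable, of y] by simp

lemma distr_fst_density_exp:
  assumes [measurable]: "a \<in> borel_measurable \<mu>" "b \<in> borel_measurable \<nu>"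
  shows "distr (density (\<mu> \<Otimes>\<^sub>M \<nu>) (\<lambda>z. ennreal (exp (a (fst z) + b (snd z) - c (fst z) (snd z))))) \<mu> fst
    = density \<mu> (\<lambda>x. ennreal (exp (a x)) * (\<integral>\<^sup>+ y. ennreal (exp (b y - c x y)) \<partial>\<nu>))"
    (is "distr ?P \<mu> fst = density \<mu> ?f")
proof (rule measure_eqI)
  fix A assume "A \<in> sets (distr ?P \<mu> fst)"
  then have A[measurable]: "A \<in> sets \<mu>" by simp
  have "fst -` A \<inter> space (\<mu> \<Otimes>\<^sub>M \<nu>) = A \<times> space \<nu>"
    using sets.sets_into_space[OF A] by (auto simp: space_pair_measure)
  then have "emeasure (distr ?P \<mu> fst) A
     = (\<integral>\<^sup>+ z. ennreal (exp (a (fst z) + b (snd z) - c (fst z) (snd z))) * indicator (A \<times> space \<nu>) z \<partial>(\<mu> \<Otimes>\<^sub>M \<nu>))"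
    by (subst emeasure_distr) (auto simp: emeasure_density)
  also have "\<dots> = (\<integral>\<^sup>+ x. \<integral>\<^sup>+ y. ennreal (exp (a x + b y - c x y)) * indicator (A \<times> space \<nu>) (x, y) \<partial>\<nu> \<partial>\<mu>)"
    by (subst M2.nn_integral_fst[symmetric]) auto
  also have "\<dots> = (\<integral>\<^sup>+ x. ?f x * indicator A x \<partial>\<mu>)"
  proof (rule nn_integral_cong)
    fix x assume x: "x \<in> space \<mu>"
    note [measurable] = cost_measurable_left[OF x]
    have "(\<integral>\<^sup>+ y. ennreal (exp (a x + b y - c x y)) * indicator (A \<times> space \<nu>) (x, y) \<partial>\<nu>)
        = (\<integral>\<^sup>+ y. (ennreal (exp (a x)) * indicator A x) * ennreal (exp (b y - c x y)) \<partial>\<nu>)"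
      by (rule nn_integral_cong)
         (auto simp: indicator_def exp_add[symmetric] ennreal_mult[symmetric] algebra_simps)
    also have "\<dots> = ?f x * indicator A x"
      by (subst nn_integral_cmult) (auto simp: ac_simps)
    finally show "(\<integral>\<^sup>+ y. ennreal (exp (a x + b y - c x y)) * indicator (A \<times> space \<nu>) (x, y) \<partial>\<nu>)
      = ?f x * indicator A x" .
  qed
  also have "\<dots> = emeasure (density \<mu> ?f) A"
    by (subst emeasure_density) auto
  finally show "emeasure (distr ?P \<mu> fst) A = emeasure (density \<mu> ?f) A" .
qed simp

lemma distr_snd_density_exp:
  assumes [measurable]: "a \<in> borel_measurable \<mu>" "b \<in> borel_measurable \<nu>"
  shows "distr (density (\<mu> \<Otimes>\<^sub>M \<nu>) (\<lambda>z. ennreal (exp (a (fst z) + b (snd z) - c (fst z) (snd z))))) \<nu> snd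
    = density \<nu> (\<lambda>y. ennreal (exp (b y)) * (\<integral>\<^sup>+ x. ennreal (exp (a x - c x y)) \<partial>\<mu>))"
    (is "distr ?P \<nu> snd = density \<nu> ?g")
proof (rule measure_eqI)
  fix A assume "A \<in> sets (distr ?P \<nu> snd)"
  then have A[measurable]: "A \<in> sets \<nu>" by simp
  have "snd -` A \<inter> space (\<mu> \<Otimes>\<^sub>M \<nu>) = space \<mu> \<times> A"
    using sets.sets_into_space[OF A] by (auto simp: space_pair_measure)
  then have "emeasure (distr ?P \<nu> snd) A
     = (\<integral>\<^sup>+ z. ennreal (exp (a (fst z) + b (snd z) - c (fst z) (snd z))) * indicator (space \<mu> \<times> A) z \<partial>(\<mu> \<Otimes>\<^sub>M \<nu>))"
    by (subst emeasure_distr) (auto simp: emeasure_density)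
  also have "\<dots> = (\<integral>\<^sup>+ y. \<integral>\<^sup>+ x. ennreal (exp (a x + b y - c x y)) * indicator (space \<mu> \<times> A) (x, y) \<partial>\<mu> \<partial>\<nu>)"
    by (subst nn_integral_snd[symmetric]) auto
  also have "\<dots> = (\<integral>\<^sup>+ y. ?g y * indicator A y \<partial>\<nu>)"
  proof (rule nn_integral_cong)
    fix y assume y: "y \<in> space \<nu>"
    note [measurable] = cost_measurable_right[OF y]
    have "(\<integral>\<^sup>+ x. ennreal (exp (a x + b y - c x y)) * indicator (space \<mu> \<times> A) (x, y) \<partial>\<mu>)
        = (\<integral>\<^sup>+ x. (ennreal (exp (b y)) * indicator A y) * ennreal (exp (a x - c x y)) \<partial>\<mu>)"
      by (rule nn_integral_cong)
         (auto simp: indicator_def exp_add[symmetric] ennreal_mult[symmetric] algebra_simps)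
    also have "\<dots> = ?g y * indicator A y"
      by (subst nn_integral_cmult) (auto simp: ac_simps)
    finally show "(\<integral>\<^sup>+ x. ennreal (exp (a x + b y - c x y)) * indicator (space \<mu> \<times> A) (x, y) \<partial>\<mu>)
      = ?g y * indicator A y" .
  qed
  also have "\<dots> = emeasure (density \<nu> ?g) A"
    by (subst emeasure_density) auto
  finally show "emeasure (distr ?P \<nu> snd) A = emeasure (density \<nu> ?g) A" .
qed simp

abbreviation "\<phi> \<equiv> sk_phi \<mu> \<nu> c"
abbreviation "\<psi> \<equiv> sk_psi \<mu> \<nu> c"

lemma phi_Suc_eq: "\<phi> (Suc t) x = - ln (\<integral>y. exp (\<psi> t y - c x y) \<partial>\<nu>)"
  by (simp add: sk_psi_def)

lemma psi_eq: "\<psi> t y = - ln (\<integral>x. exp (\<phi> t x - c x y) \<partial>\<mu>)"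
  by (simp add: sk_psi_def sk_psi_of_def)

declare sk_phi.simps(2)[simp del]

text \<open>The invariant of the iteration: it makes the integral defining \<psi> t finite for
  \<nu>-almost every y. The weight W is 1 at t = 0 and exp (\<psi> (t - 1)) afterwards.\<close>
definition admissible :: "nat \<Rightarrow> bool" where
  "admissible t \<longleftrightarrow> \<phi> t \<in> borel_measurable \<mu> \<and>
     (\<exists>W. W \<in> borel_measurable \<nu> \<and> (\<forall>y. 0 < W y) \<and>
        (\<integral>\<^sup>+ y. ennreal (W y) * (\<integral>\<^sup>+ x. ennreal (exp (\<phi> t x - c x y)) \<partial>\<mu>) \<partial>\<nu>) < \<infinity>)"

lemma admissible_psi:
  assumes "admissible t"
  shows "\<psi> t \<in> borel_measurable \<nu>"
    and "AE y in \<nu>. (\<integral>\<^sup>+ x. ennreal (exp (\<phi> t x - c x y)) \<partial>\<mu>) = ennreal (exp (- \<psi> t y))"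
proof -
  obtain W where [measurable]: "\<phi> t \<in> borel_measurable \<mu>" "W \<in> borel_measurable \<nu>"
    and W: "\<And>y. 0 < W y" "(\<integral>\<^sup>+ y. ennreal (W y) * (\<integral>\<^sup>+ x. ennreal (exp (\<phi> t x - c x y)) \<partial>\<mu>) \<partial>\<nu>) < \<infinity>"
    using assms unfolding admissible_def by blast
  have "(\<lambda>z. exp (\<phi> t (snd z) - c (snd z) (fst z))) \<in> borel_measurable (\<nu> \<Otimes>\<^sub>M \<mu>)" by measurable
  note fibre = AE_fibre_integral_pos[OF prob_\<mu>, of "\<lambda>y x. exp (\<phi> t x - c x y)", OF this exp_gt_zero
      \<open>W \<in> borel_measurable \<nu>\<close> W]
  show "\<psi> t \<in> borel_measurable \<nu>"
    using fibre(1) by (simp add: psi_eq[abs_def])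
  show "AE y in \<nu>. (\<integral>\<^sup>+ x. ennreal (exp (\<phi> t x - c x y)) \<partial>\<mu>) = ennreal (exp (- \<psi> t y))"
    using fibre(2) by (rule eventually_mono) (clarsimp simp: psi_eq)
qed

definition pi_even :: "nat \<Rightarrow> ('a \<times> 'b) measure" where
  "pi_even t = density (\<mu> \<Otimes>\<^sub>M \<nu>) (\<lambda>z. ennreal (exp (\<phi> t (fst z) + \<psi> t (snd z) - c (fst z) (snd z))))"

definition pi_odd :: "nat \<Rightarrow> ('a \<times> 'b) measure" where
  "pi_odd t = density (\<mu> \<Otimes>\<^sub>M \<nu>) (\<lambda>z. ennreal (exp (\<phi> (Suc t) (fst z) + \<psi> t (snd z) - c (fst z) (snd z))))"

lemma sets_pi_even: "sets (pi_even t) = sets (\<mu> \<Otimes>\<^sub>M \<nu>)"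
  unfolding pi_even_def by simp

lemma sets_pi_odd: "sets (pi_odd t) = sets (\<mu> \<Otimes>\<^sub>M \<nu>)"
  unfolding pi_odd_def by simp

lemma measurable_pi_even [measurable]:
  "fst \<in> measurable (pi_even t) \<mu>" "snd \<in> measurable (pi_even t) \<nu>"
  by (simp_all add: measurable_cong_sets[OF sets_pi_even refl])

lemma measurable_pi_odd [measurable]:
  "fst \<in> measurable (pi_odd t) \<mu>" "snd \<in> measurable (pi_odd t) \<nu>"
  by (simp_all add: measurable_cong_sets[OF sets_pi_odd refl])

lemma even_step:
  assumes "admissible t"
  shows "\<phi> (Suc t) \<in> borel_measurable \<mu>"
    and "distr (pi_even t) \<nu> snd = \<nu>"
    and "distr (pi_even t) \<mu> fst = density \<mu> (\<lambda>x. ennreal (exp (\<phi> t x - \<phi> (Suc t) x)))"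
    and "AE x in \<mu>. (\<integral>\<^sup>+ y. ennreal (exp (\<psi> t y - c x y)) \<partial>\<nu>) = ennreal (exp (- \<phi> (Suc t) x))"
proof -
  have [measurable]: "\<phi> t \<in> borel_measurable \<mu>" using assms unfolding admissible_def by blast
  note [measurable] = admissible_psi(1)[OF assms]
  have "distr (pi_even t) \<nu> snd
      = density \<nu> (\<lambda>y. ennreal (exp (\<psi> t y)) * (\<integral>\<^sup>+ x. ennreal (exp (\<phi> t x - c x y)) \<partial>\<mu>))"
    unfolding pi_even_def by (rule distr_snd_density_exp) auto
  also have "\<dots> = density \<nu> (\<lambda>_. 1)"
    using admissible_psi(2)[OF assms]
    by (intro density_cong) (auto elim!: eventually_mono simp: ennreal_exp_mult)
  finally show snd: "distr (pi_even t) \<nu> snd = \<nu>" by (simp add: density_1)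
  have fst: "distr (pi_even t) \<mu> fst
      = density \<mu> (\<lambda>x. ennreal (exp (\<phi> t x)) * (\<integral>\<^sup>+ y. ennreal (exp (\<psi> t y - c x y)) \<partial>\<nu>))"
    unfolding pi_even_def by (rule distr_fst_density_exp) auto
  have "prob_space (pi_even t)"
    by (rule prob_space_distrD[of snd _ \<nu>]) (simp_all add: snd prob_\<nu>)
  then have "prob_space (distr (pi_even t) \<mu> fst)"
    by (rule prob_space.prob_space_distr) simp
  from prob_space.emeasure_space_1[OF this]
  have "(\<integral>\<^sup>+ x. ennreal (exp (\<phi> t x)) * (\<integral>\<^sup>+ y. ennreal (exp (\<psi> t y - c x y)) \<partial>\<nu>) \<partial>\<mu>) < \<infinity>"
    unfolding fst space_density by (subst (asm) emeasure_density_space) auto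
  moreover have "(\<lambda>z. exp (\<psi> t (snd z) - c (fst z) (snd z))) \<in> borel_measurable (\<mu> \<Otimes>\<^sub>M \<nu>)"
    by measurable
  ultimately have fibre: "(\<lambda>x. \<integral>y. exp (\<psi> t y - c x y) \<partial>\<nu>) \<in> borel_measurable \<mu>"
    "AE x in \<mu>. 0 < (\<integral>y. exp (\<psi> t y - c x y) \<partial>\<nu>)
       \<and> (\<integral>\<^sup>+ y. ennreal (exp (\<psi> t y - c x y)) \<partial>\<nu>) = ennreal (\<integral>y. exp (\<psi> t y - c x y) \<partial>\<nu>)"
    using AE_fibre_integral_pos[OF prob_\<nu>, of "\<lambda>x y. exp (\<psi> t y - c x y)" \<mu> "\<lambda>x. exp (\<phi> t x)"]
    by auto
  show ae: "AE x in \<mu>. (\<integral>\<^sup>+ y. ennreal (exp (\<psi> t y - c x y)) \<partial>\<nu>) = ennreal (exp (- \<phi> (Suc t) x))"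
    using fibre(2) by (rule eventually_mono) (simp add: phi_Suc_eq)
  show [measurable]: "\<phi> (Suc t) \<in> borel_measurable \<mu>"
    using fibre(1) by (simp add: phi_Suc_eq[abs_def])
  show "distr (pi_even t) \<mu> fst = density \<mu> (\<lambda>x. ennreal (exp (\<phi> t x - \<phi> (Suc t) x)))"
    unfolding fst using ae
    by (intro density_cong) (auto elim!: eventually_mono simp: ennreal_exp_mult)
qed

lemma odd_step:
  assumes "admissible t"
  shows "admissible (Suc t)"
    and "distr (pi_odd t) \<mu> fst = \<mu>"
    and "distr (pi_odd t) \<nu> snd = density \<nu> (\<lambda>y. ennreal (exp (\<psi> t y - \<psi> (Suc t) y)))"
proof -
  note [measurable] = even_step(1)[OF assms] admissible_psi(1)[OF assms]
  have "distr (pi_odd t) \<mu> fst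
      = density \<mu> (\<lambda>x. ennreal (exp (\<phi> (Suc t) x)) * (\<integral>\<^sup>+ y. ennreal (exp (\<psi> t y - c x y)) \<partial>\<nu>))"
    unfolding pi_odd_def by (rule distr_fst_density_exp) auto
  also have "\<dots> = density \<mu> (\<lambda>_. 1)"
    using even_step(4)[OF assms]
    by (intro density_cong) (auto elim!: eventually_mono simp: ennreal_exp_mult)
  finally show fst: "distr (pi_odd t) \<mu> fst = \<mu>" by (simp add: density_1)
  have snd: "distr (pi_odd t) \<nu> snd
      = density \<nu> (\<lambda>y. ennreal (exp (\<psi> t y)) * (\<integral>\<^sup>+ x. ennreal (exp (\<phi> (Suc t) x - c x y)) \<partial>\<mu>))"
    unfolding pi_odd_def by (rule distr_snd_density_exp) auto
  have "prob_space (pi_odd t)"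
    by (rule prob_space_distrD[of fst _ \<mu>]) (simp_all add: fst prob_\<mu>)
  then have "prob_space (distr (pi_odd t) \<nu> snd)"
    by (rule prob_space.prob_space_distr) simp
  from prob_space.emeasure_space_1[OF this]
  have "(\<integral>\<^sup>+ y. ennreal (exp (\<psi> t y)) * (\<integral>\<^sup>+ x. ennreal (exp (\<phi> (Suc t) x - c x y)) \<partial>\<mu>) \<partial>\<nu>) < \<infinity>"
    unfolding snd space_density by (subst (asm) emeasure_density_space) auto
  then show admissible: "admissible (Suc t)"
    unfolding admissible_def by (intro conjI exI[of _ "\<lambda>y. exp (\<psi> t y)"]) auto
  note [measurable] = admissible_psi(1)[OF admissible]
  show "distr (pi_odd t) \<nu> snd = density \<nu> (\<lambda>y. ennreal (exp (\<psi> t y - \<psi> (Suc t) y)))"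
    unfolding snd using admissible_psi(2)[OF admissible]
    by (intro density_cong) (auto elim!: eventually_mono simp: ennreal_exp_mult)
qed

lemma admissible: "admissible t"
proof (induction t)
  case 0
  have "(\<integral>\<^sup>+ y. ennreal 1 * (\<integral>\<^sup>+ x. ennreal (exp (\<phi> 0 x - c x y)) \<partial>\<mu>) \<partial>\<nu>)
      = (\<integral>\<^sup>+ z. ennreal (exp (- c (fst z) (snd z))) \<partial>(\<mu> \<Otimes>\<^sub>M \<nu>))"
    by (subst nn_integral_snd[symmetric]) auto
  also have "\<dots> < \<infinity>"
    using exp_neg_cost_integrable by (auto simp: integrable_iff_bounded)
  finally show ?case
    unfolding admissible_def by (intro conjI exI[of _ "\<lambda>_. 1"]) auto
qed (rule odd_step(1))

lemma phi_measurable[measurable]: "\<phi> t \<in> borel_measurable \<mu>"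
  using admissible[of t] unfolding admissible_def by blast

lemma psi_measurable[measurable]: "\<psi> t \<in> borel_measurable \<nu>"
  using admissible_psi(1)[OF admissible] .

definition mu_even :: "nat \<Rightarrow> 'a measure" where
  "mu_even t = density \<mu> (\<lambda>x. ennreal (exp (\<phi> t x - \<phi> (Suc t) x)))"

definition nu_odd :: "nat \<Rightarrow> 'b measure" where
  "nu_odd t = density \<nu> (\<lambda>y. ennreal (exp (\<psi> t y - \<psi> (Suc t) y)))"

lemma distr_pi_even_fst [simp]: "distr (pi_even t) \<mu> fst = mu_even t"
  using even_step(3)[OF admissible] unfolding mu_even_def .

lemma distr_pi_even_snd [simp]: "distr (pi_even t) \<nu> snd = \<nu>"
  using even_step(2)[OF admissible] .

lemma distr_pi_odd_fst [simp]: "distr (pi_odd t) \<mu> fst = \<mu>"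
  using odd_step(2)[OF admissible] .

lemma distr_pi_odd_snd [simp]: "distr (pi_odd t) \<nu> snd = nu_odd t"
  using odd_step(3)[OF admissible] unfolding nu_odd_def .

lemma prob_space_pi_even: "prob_space (pi_even t)"
  by (rule prob_space_distrD[of snd _ \<nu>]) (simp_all add: prob_\<nu>)

lemma prob_space_pi_odd: "prob_space (pi_odd t)"
  by (rule prob_space_distrD[of fst _ \<mu>]) (simp_all add: prob_\<mu>)

lemma prob_space_mu_even: "prob_space (mu_even t)"
  using prob_space.prob_space_distr[OF prob_space_pi_even measurable_pi_even(1)] by simp

lemma pi_odd_eq_density_pi_even:
  "pi_odd t = density (pi_even t) (\<lambda>z. ennreal (exp (\<phi> (Suc t) (fst z) - \<phi> t (fst z))))"
  unfolding pi_even_def pi_odd_def by (subst density_density_exp) auto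

lemma pi_even_eq_density_pi_odd:
  "pi_even t = density (pi_odd t) (\<lambda>z. ennreal (exp (\<phi> t (fst z) - \<phi> (Suc t) (fst z))))"
  unfolding pi_even_def pi_odd_def by (subst density_density_exp) auto

lemma pi_even_Suc_eq_density_pi_odd:
  "pi_even (Suc t) = density (pi_odd t) (\<lambda>z. ennreal (exp (\<psi> (Suc t) (snd z) - \<psi> t (snd z))))"
  unfolding pi_even_def pi_odd_def by (subst density_density_exp) auto

lemma pi_odd_eq_density_pi_even_Suc:
  "pi_odd t = density (pi_even (Suc t)) (\<lambda>z. ennreal (exp (\<psi> t (snd z) - \<psi> (Suc t) (snd z))))"
  unfolding pi_even_def pi_odd_def by (subst density_density_exp) auto

lemma mu_eq_density_mu_even: "\<mu> = density (mu_even t) (\<lambda>x. ennreal (exp (\<phi> (Suc t) x - \<phi> t x)))"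
  unfolding mu_even_def by (subst density_density_exp) (auto simp: density_1)

lemma nu_eq_density_nu_odd: "\<nu> = density (nu_odd t) (\<lambda>y. ennreal (exp (\<psi> (Suc t) y - \<psi> t y)))"
  unfolding nu_odd_def by (subst density_density_exp) (auto simp: density_1)

lemma rel_ent_mu_even_Suc_le: "rel_ent (mu_even (Suc t)) \<mu> \<le> rel_ent \<nu> (nu_odd t)"
proof -
  have "rel_ent (distr (pi_even (Suc t)) \<mu> fst) (distr (pi_odd t) \<mu> fst)
      \<le> rel_ent (distr (pi_even (Suc t)) \<nu> snd) (distr (pi_odd t) \<nu> snd)"
    unfolding pi_even_Suc_eq_density_pi_odd
    by (rule rel_ent_distr_le_distr[OF prob_space_pi_odd])
      (auto simp flip: pi_even_Suc_eq_density_pi_odd simp: prob_space_pi_even mu_even_def)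
  then show ?thesis by simp
qed

lemma rel_ent_mu_mu_even_Suc_le: "rel_ent \<mu> (mu_even (Suc t)) \<le> rel_ent (nu_odd t) \<nu>"
proof -
  have "rel_ent (distr (pi_odd t) \<mu> fst) (distr (pi_even (Suc t)) \<mu> fst)
      \<le> rel_ent (distr (pi_odd t) \<nu> snd) (distr (pi_even (Suc t)) \<nu> snd)"
    unfolding pi_odd_eq_density_pi_even_Suc
    by (rule rel_ent_distr_le_distr[OF prob_space_pi_even,
        where f = "\<lambda>x. exp (\<phi> (Suc (Suc t)) x - \<phi> (Suc t) x)"])
      (auto simp flip: pi_odd_eq_density_pi_even_Suc mu_eq_density_mu_even simp: prob_space_pi_odd)
  then show ?thesis by simp
qed

lemma rel_ent_nu_odd_nu_le: "rel_ent (nu_odd t) \<nu> \<le> rel_ent \<mu> (mu_even t)"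
proof -
  have "rel_ent (distr (pi_odd t) \<nu> snd) (distr (pi_even t) \<nu> snd)
      \<le> rel_ent (distr (pi_odd t) \<mu> fst) (distr (pi_even t) \<mu> fst)"
    unfolding pi_odd_eq_density_pi_even
    by (rule rel_ent_distr_le_distr[OF prob_space_pi_even])
      (auto simp flip: pi_odd_eq_density_pi_even simp: prob_space_pi_odd nu_odd_def)
  then show ?thesis by simp
qed

lemma rel_ent_nu_nu_odd_le: "rel_ent \<nu> (nu_odd t) \<le> rel_ent (mu_even t) \<mu>"
proof -
  have "rel_ent (distr (pi_even t) \<nu> snd) (distr (pi_odd t) \<nu> snd)
      \<le> rel_ent (distr (pi_even t) \<mu> fst) (distr (pi_odd t) \<mu> fst)"
    unfolding pi_even_eq_density_pi_odd
    by (rule rel_ent_distr_le_distr[OF prob_space_pi_odd,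
        where f = "\<lambda>y. exp (\<psi> (Suc t) y - \<psi> t y)"])
      (auto simp flip: pi_even_eq_density_pi_odd nu_eq_density_nu_odd simp: prob_space_pi_even)
  then show ?thesis by simp
qed

lemma rel_ent_mu_mu_even_antimono: "s \<le> t \<Longrightarrow> rel_ent \<mu> (mu_even t) \<le> rel_ent \<mu> (mu_even s)"
  by (rule lift_Suc_antimono_le[of "\<lambda>t. rel_ent \<mu> (mu_even t)"])
    (rule order_trans[OF rel_ent_mu_mu_even_Suc_le rel_ent_nu_odd_nu_le])

lemma rel_ent_mu_even_mu_le_rel_ent_nu_nu_odd:
  assumes "s < t" shows "rel_ent (mu_even t) \<mu> \<le> rel_ent \<nu> (nu_odd s)"
proof -
  have "rel_ent (mu_even t) \<mu> \<le> rel_ent (mu_even (Suc s)) \<mu>"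
    by (rule lift_Suc_antimono_le[of "\<lambda>t. rel_ent (mu_even t) \<mu>"])
      (rule order_trans[OF rel_ent_mu_even_Suc_le rel_ent_nu_nu_odd_le], use assms in simp)
  also have "\<dots> \<le> rel_ent \<nu> (nu_odd s)" by (rule rel_ent_mu_even_Suc_le)
  finally show ?thesis .
qed

lemma sk_pi_double: "sk_pi \<mu> \<nu> c (2 * t) = pi_even t"
  unfolding sk_pi_def pi_even_def by simp

lemma sk_mu_even_eq: "sk_mu_even \<mu> \<nu> c t = mu_even t"
  by (simp add: sk_mu_even_def sk_pi_double)

context
  fixes \<pi> assumes coupling: "\<pi> \<in> couplings \<mu> \<nu>"
begin

lemma rel_ent_pi_even_ge:
  "rel_ent \<mu> (mu_even s) + rel_ent \<pi> (pi_odd s) \<le> rel_ent \<pi> (pi_even s)"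
proof -
  have "rel_ent (distr \<pi> \<mu> fst) (distr (pi_even s) \<mu> fst) + rel_ent \<pi> (pi_odd s)
      \<le> rel_ent \<pi> (pi_even s)"
    unfolding pi_odd_eq_density_pi_even using coupling
    by (intro rel_ent_distr_add_rel_ent_le[OF prob_space_pi_even])
      (auto simp flip: pi_odd_eq_density_pi_even mu_eq_density_mu_even
        simp: couplings_def sets_pi_even prob_space_pi_odd)
  then show ?thesis using coupling by (simp add: couplings_def)
qed

lemma rel_ent_pi_odd_ge:
  "rel_ent \<nu> (nu_odd s) + rel_ent \<pi> (pi_even (Suc s)) \<le> rel_ent \<pi> (pi_odd s)"
proof -
  have "rel_ent (distr \<pi> \<nu> snd) (distr (pi_odd s) \<nu> snd) + rel_ent \<pi> (pi_even (Suc s))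
      \<le> rel_ent \<pi> (pi_odd s)"
    unfolding pi_even_Suc_eq_density_pi_odd using coupling
    by (intro rel_ent_distr_add_rel_ent_le[OF prob_space_pi_odd])
      (auto simp flip: pi_even_Suc_eq_density_pi_odd nu_eq_density_nu_odd
        simp: couplings_def sets_pi_odd prob_space_pi_even)
  then show ?thesis using coupling by (simp add: couplings_def)
qed

lemma rel_ent_pi_even_Suc_le:
  "rel_ent \<mu> (mu_even s) + rel_ent \<nu> (nu_odd s) + rel_ent \<pi> (pi_even (Suc s)) \<le> rel_ent \<pi> (pi_even s)"
proof -
  have "rel_ent \<mu> (mu_even s) + rel_ent \<nu> (nu_odd s) + rel_ent \<pi> (pi_even (Suc s))
      \<le> rel_ent \<mu> (mu_even s) + rel_ent \<pi> (pi_odd s)"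
    unfolding add.assoc by (intro add_left_mono rel_ent_pi_odd_ge)
  also have "\<dots> \<le> rel_ent \<pi> (pi_even s)" by (rule rel_ent_pi_even_ge)
  finally show ?thesis .
qed

lemma rel_ent_mu_even_sym_le:
  assumes "1 \<le> t"
  shows "rel_ent (mu_even t) \<mu> + rel_ent \<mu> (mu_even t)
    \<le> 2 * rel_ent \<pi> (pi_even (t div 2)) / ereal (real t)"
proof (rule ereal_le_twice_divide)
  show "0 \<le> rel_ent (mu_even t) \<mu> + rel_ent \<mu> (mu_even t)"
    by (intro add_nonneg_nonneg rel_ent_nonneg prob_space_mu_even prob_\<mu>)
  show "(rel_ent (mu_even t) \<mu> + rel_ent \<mu> (mu_even t)) * ereal (real (t - t div 2))
      \<le> rel_ent \<pi> (pi_even (t div 2))"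
  proof (rule telescoping_mean_le[where e = "\<lambda>s. rel_ent \<mu> (mu_even s) + rel_ent \<nu> (nu_odd s)"])
    show "rel_ent \<mu> (mu_even s) + rel_ent \<nu> (nu_odd s) + rel_ent \<pi> (pi_even (Suc s))
      \<le> rel_ent \<pi> (pi_even s)" for s
      by (rule rel_ent_pi_even_Suc_le)
    show "0 \<le> rel_ent \<pi> (pi_even s)" for s
      using coupling by (intro rel_ent_nonneg prob_space_pi_even) (simp add: couplings_def)
    show "rel_ent (mu_even t) \<mu> + rel_ent \<mu> (mu_even t) \<le> rel_ent \<mu> (mu_even s) + rel_ent \<nu> (nu_odd s)"
      if "t div 2 \<le> s" "s < t" for s
      using rel_ent_mu_even_mu_le_rel_ent_nu_nu_odd[OF \<open>s < t\<close>] rel_ent_mu_mu_even_antimono[of s t] that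
      by (simp add: add.commute add_mono)
  qed simp
qed fact

end

end

theorem proposition4p3:
  fixes \<mu> :: "'a::polish_space measure" and \<nu> :: "'b::polish_space measure"
    and c :: "'a \<Rightarrow> 'b \<Rightarrow> real" and \<pi>s :: "('a \<times> 'b) measure" and t :: nat
  assumes "prob_space \<mu>" and "sets \<mu> = sets borel"
    and "prob_space \<nu>" and "sets \<nu> = sets borel"
    and "(\<lambda>z. c (fst z) (snd z)) \<in> borel_measurable (\<mu> \<Otimes>\<^sub>M \<nu>)"
    and "integrable (\<mu> \<Otimes>\<^sub>M \<nu>) (\<lambda>z. exp (- c (fst z) (snd z)))"
    and "\<bar>C1 \<mu> \<nu> c\<bar> \<noteq> \<infinity>"
    and "\<pi>s \<in> couplings \<mu> \<nu>" and "eot_obj \<mu> \<nu> c \<pi>s = C1 \<mu> \<nu> c"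
    and "t \<ge> 1"
  shows "rel_ent (sk_mu_even \<mu> \<nu> c t) \<mu> + rel_ent \<mu> (sk_mu_even \<mu> \<nu> c t)
           \<le> 2 * rel_ent \<pi>s (sk_pi \<mu> \<nu> c (2 * (t div 2))) / ereal (real t)"
proof -
  interpret sinkhorn \<mu> \<nu> c
    unfolding sinkhorn_def using assms(1,3,5,6) by blast
  show ?thesis
    unfolding sk_mu_even_eq sk_pi_double using rel_ent_mu_even_sym_le[OF assms(8,10)] .
qed

end
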